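(* Let $(\mathfrak{g},[\cdot,\ldots,\cdot],\varepsilon,\alpha)$ be an $n$-Hom-Lie color algebra. Then $\mathfrak{g}$ admits a strict product structure if and only if $\mathfrak{g}$ admits a decomposition $\mathfrak{g}=\mathfrak{g}_+\oplus\mathfrak{g}_-$ into two nonzero $\Gamma$-graded subalgebras $\mathfrak{g}_+,\mathfrak{g}_-$ such that for every $1\le i\le n-1$, $[a_1,\ldots,a_i,b_{i+1},\ldots,b_n]=0$ for all $a_1,\ldots,a_i\in\mathfrak{g}_+$ and $b_{i+1},\ldots,b_n\in\mathfrak{g}_-$.
   Context: $\mathbb{K}$ is a field of characteristic zero and $\Gamma$ an abelian group. A bicharacter is a map $\varepsilon:\Gamma\times\Gamma\to\mathbb{K}\setminus\{0\}$ with $\varepsilon(a,b)\varepsilon(b,a)=1$, $\varepsilon(a,b+c)=\varepsilon(a,b)\varepsilon(a,c)$, $\varepsilon(a+b,c)=\varepsilon(a,c)\varepsilon(b,c)$. For homogeneous $x,y$, $\varepsilon(x,y)=\varepsilon(|x|,|y|)$ and $\varepsilon(x,y_1+\dots+y_k)=\varepsilon(|x|,|y_1|+\dots+|y_k|)$ ($=1$ for an empty sum). An $n$-Hom-Lie color algebra $(\mathfrak{g},[\cdot,\ldots,\cdot],\varepsilon,\alpha)$ is a $\Gamma$-graded vector space with an $n$-linear bracket of degree zero, a bicharacter $\varepsilon$ and a degree-zero linear map $\alpha$ such that for homogeneous elements: (i) $[x_1,\ldots,x_i,x_{i+1},\ldots,x_n]=-\varepsilon(x_i,x_{i+1})[x_1,\ldots,x_{i+1},x_i,\ldots,x_n]$;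 (ii) $[\alpha(x_1),\ldots,\alpha(x_{n-1}),[y_1,\ldots,y_n]]=\sum_{i=1}^n\varepsilon(x_1+\dots+x_{n-1},y_1+\dots+y_{i-1})[\alpha(y_1),\ldots,\alpha(y_{i-1}),[x_1,\ldots,x_{n-1},y_i],\alpha(y_{i+1}),\ldots,\alpha(y_n)]$. A $\Gamma$-graded subalgebra is a graded subspace $\mathfrak{h}=\bigoplus_\gamma(\mathfrak{h}\cap\mathfrak{g}_\gamma)$ with $\alpha(\mathfrak{h})\subseteq\mathfrak{h}$ and $[\mathfrak{h},\ldots,\mathfrak{h}]\subseteq\mathfrak{h}$. An almost product structure is a degree-zero linear map $\mathcal{P}:\mathfrak{g}\to\mathfrak{g}$ with $\mathcal{P}\neq\pm\mathrm{id}$ and $\mathcal{P}^2=\mathrm{id}$. A degree-zero linear map $\Theta$ is in the centroid if $\Theta\alpha=\alpha\Theta$ and $\Theta([x_1,x_2,\ldots,x_n])=[\Theta x_1,x_2,\ldots,x_n]$ for all $x_i$. A strict product structure is an almost product structure lying in the centroid. *)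

theory Defs
  imports Complex_Main
begin

definition bicharacter :: "('g::ab_group_add \<Rightarrow> 'g \<Rightarrow> 'k::field) \<Rightarrow> bool" where
  "bicharacter eps \<longleftrightarrow>
     (\<forall>a b. eps a b \<noteq> 0) \<and>
     (\<forall>a b. eps a b * eps b a = 1) \<and>
     (\<forall>a b c. eps a (b + c) = eps a b * eps a c) \<and>
     (\<forall>a b c. eps (a + b) c = eps a c * eps b c)"

definition graded_space ::
  "('k::field \<Rightarrow> 'v::ab_group_add \<Rightarrow> 'v) \<Rightarrow> ('g \<Rightarrow> 'v set) \<Rightarrow> bool" where
  "graded_space scale G \<longleftrightarrow>
     vector_space scale \<and>
     (\<forall>a. module.subspace scale (G a)) \<and>
     (\<forall>v. \<exists>f. finite {a. f a \<noteq> 0} \<and> (\<forall>a. f a \<in> G a) \<and> v = (\<Sum>a\<in>{a. f a \<noteq> 0}. f a)) \<and>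
     (\<forall>f. finite {a. f a \<noteq> 0} \<and> (\<forall>a. f a \<in> G a) \<and> (\<Sum>a\<in>{a. f a \<noteq> 0}. f a) = 0
          \<longrightarrow> (\<forall>a. f a = 0))"

definition deg0_linear ::
  "('k::field \<Rightarrow> 'v::ab_group_add \<Rightarrow> 'v) \<Rightarrow> ('g \<Rightarrow> 'v set) \<Rightarrow> ('v \<Rightarrow> 'v) \<Rightarrow> bool" where
  "deg0_linear scale G f \<longleftrightarrow> Vector_Spaces.linear scale scale f \<and> (\<forall>a. f ` G a \<subseteq> G a)"

text \<open>The n-ary bracket is modelled as a function on lists; only lists of length n matter.
  The i-th argument (0-based) of the list \<open>xs\<close> is \<open>xs ! i\<close>.\<close>
definition n_Hom_Lie_color_algebra ::
  "('k::field_char_0 \<Rightarrow> 'v::ab_group_add \<Rightarrow> 'v) \<Rightarrow> ('g::ab_group_add \<Rightarrow> 'v set) \<Rightarrow> nat \<Rightarrow>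
   ('v list \<Rightarrow> 'v) \<Rightarrow> ('g \<Rightarrow> 'g \<Rightarrow> 'k) \<Rightarrow> ('v \<Rightarrow> 'v) \<Rightarrow> bool" where
  "n_Hom_Lie_color_algebra scale G n br eps \<alpha> \<longleftrightarrow>
     graded_space scale G \<and>
     bicharacter eps \<and>
     deg0_linear scale G \<alpha> \<and>
     \<comment> \<open>n-linearity of the bracket\<close>
     (\<forall>xs i x y c. length xs = n \<and> i < n \<longrightarrow>
        br (xs[i := x + y]) = br (xs[i := x]) + br (xs[i := y]) \<and>
        br (xs[i := scale c x]) = scale c (br (xs[i := x]))) \<and>
     \<comment> \<open>the bracket has degree zero\<close>
     (\<forall>xs ds. length xs = n \<and> length ds = n \<and> (\<forall>j<n. xs ! j \<in> G (ds ! j))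
        \<longrightarrow> br xs \<in> G (sum_list ds)) \<and>
     \<comment> \<open>(i) \<open>\<epsilon>\<close>-skew-symmetry for homogeneous elements\<close>
     (\<forall>xs ds i. length xs = n \<and> length ds = n \<and> (\<forall>j<n. xs ! j \<in> G (ds ! j)) \<and> i + 1 < n
        \<longrightarrow> br xs = - scale (eps (ds ! i) (ds ! (i + 1)))
                        (br (xs[i := xs ! (i + 1), i + 1 := xs ! i]))) \<and>
     \<comment> \<open>(ii) Hom-Filippov-Jacobi identity for homogeneous elements\<close>
     (\<forall>xs dx ys dy. length xs = n - 1 \<and> length dx = n - 1 \<and> (\<forall>j<n - 1. xs ! j \<in> G (dx ! j)) \<and>
        length ys = n \<and> length dy = n \<and> (\<forall>j<n. ys ! j \<in> G (dy ! j)) \<longrightarrow>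
        br (map \<alpha> xs @ [br ys]) =
          (\<Sum>i<n. scale (eps (sum_list dx) (sum_list (take i dy)))
                    (br (map \<alpha> (take i ys) @ [br (xs @ [ys ! i])] @ map \<alpha> (drop (i + 1) ys)))))"

definition almost_product_structure ::
  "('k::field \<Rightarrow> 'v::ab_group_add \<Rightarrow> 'v) \<Rightarrow> ('g \<Rightarrow> 'v set) \<Rightarrow> ('v \<Rightarrow> 'v) \<Rightarrow> bool" where
  "almost_product_structure scale G P \<longleftrightarrow>
     deg0_linear scale G P \<and> P \<noteq> id \<and> P \<noteq> (\<lambda>x. - x) \<and> P \<circ> P = id"

definition centroid ::
  "('k::field \<Rightarrow> 'v::ab_group_add \<Rightarrow> 'v) \<Rightarrow> ('g \<Rightarrow> 'v set) \<Rightarrow> nat \<Rightarrow> ('v list \<Rightarrow> 'v) \<Rightarrow>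
   ('v \<Rightarrow> 'v) \<Rightarrow> ('v \<Rightarrow> 'v) \<Rightarrow> bool" where
  "centroid scale G n br \<alpha> \<Theta> \<longleftrightarrow>
     deg0_linear scale G \<Theta> \<and> \<Theta> \<circ> \<alpha> = \<alpha> \<circ> \<Theta> \<and>
     (\<forall>xs. length xs = n \<longrightarrow> \<Theta> (br xs) = br (xs[0 := \<Theta> (xs ! 0)]))"

definition strict_product_structure ::
  "('k::field \<Rightarrow> 'v::ab_group_add \<Rightarrow> 'v) \<Rightarrow> ('g \<Rightarrow> 'v set) \<Rightarrow> nat \<Rightarrow> ('v list \<Rightarrow> 'v) \<Rightarrow>
   ('v \<Rightarrow> 'v) \<Rightarrow> ('v \<Rightarrow> 'v) \<Rightarrow> bool" where
  "strict_product_structure scale G n br \<alpha> P \<longleftrightarrow>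
     almost_product_structure scale G P \<and> centroid scale G n br \<alpha> P"

definition graded_subalgebra ::
  "('k::field \<Rightarrow> 'v::ab_group_add \<Rightarrow> 'v) \<Rightarrow> ('g \<Rightarrow> 'v set) \<Rightarrow> nat \<Rightarrow> ('v list \<Rightarrow> 'v) \<Rightarrow>
   ('v \<Rightarrow> 'v) \<Rightarrow> 'v set \<Rightarrow> bool" where
  "graded_subalgebra scale G n br \<alpha> h \<longleftrightarrow>
     module.subspace scale h \<and>
     (\<forall>v\<in>h. \<exists>f. finite {a. f a \<noteq> 0} \<and> (\<forall>a. f a \<in> h \<inter> G a) \<and> v = (\<Sum>a\<in>{a. f a \<noteq> 0}. f a)) \<and>
     \<alpha> ` h \<subseteq> h \<and>
     (\<forall>xs. length xs = n \<and> set xs \<subseteq> h \<longrightarrow> br xs \<in> h)"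

end

theory Submission
  imports Defs
begin

(*
  A strict product structure P is an involution commuting with the bracket in the first
  slot. Since P has degree zero, epsilon-skew-symmetry moves P to any other slot (first for
  homogeneous arguments, then for all arguments by multilinearity). So the eigenspaces
  g+ = {x. P x = x} and g- = {x. P x = - x} are graded subalgebras with g = g+ + g-, and
  computing P [a_1, ..., a_i, b_(i+1), ..., b_n] through the first and through the last slot
  gives the bracket and its negative, so it vanishes.

  Conversely, for g = g+ + g- take the reflection P (a + b) = a - b. It has degree zero since
  the homogeneous components of an element of a graded subspace lie in that subspace. By
  multilinearity the centroid identity only has to be checked for arguments in g+ or g-:
  brackets with all arguments on one side stay on that side, and every other bracket of
  homogeneous elements is brought to the form [a_1, ..., a_i, b_(i+1), ..., b_n] by adjacent
  epsilon-swaps (a bubble sort), hence vanishes.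
*)

section \<open>Multiadditive functions of lists\<close>

lemma sum_over_support:
  fixes f :: "'a \<Rightarrow> 'b::comm_monoid_add"
  assumes "finite U" and "{a. f a \<noteq> 0} \<subseteq> U"
  shows "(\<Sum>a\<in>{a. f a \<noteq> 0}. f a) = sum f U"
  by (rule sum.mono_neutral_left) (use assms in auto)

lemma sum_in_slot:
  fixes F :: "'a::comm_monoid_add list \<Rightarrow> 'b::ab_group_add"
  assumes "\<And>x y. F (xs[k := x + y]) = F (xs[k := x]) + F (xs[k := y])"
  shows "F (xs[k := sum f S]) = (\<Sum>s\<in>S. F (xs[k := f s]))"
proof -
  have "F (xs[k := 0]) = 0"
    using assms[of 0 0] by simp
  then show ?thesis
    using sum_comp_morphism[of "\<lambda>x. F (xs[k := x])" f S] assms by (simp add: comp_def)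
qed

lemma multiadditive_eq_0:
  fixes F :: "'a::comm_monoid_add list \<Rightarrow> 'b::ab_group_add"
  assumes add: "\<And>xs i x y. length xs = n \<Longrightarrow> i < n \<Longrightarrow>
      F (xs[i := x + y]) = F (xs[i := x]) + F (xs[i := y])"
    and generated: "\<And>j v. j < n \<Longrightarrow> R j v \<Longrightarrow>
      \<exists>S f. finite S \<and> (\<forall>s\<in>S. Q j (f s)) \<and> v = sum f (S :: 'i set)"
    and vanish: "\<And>xs. length xs = n \<Longrightarrow> \<forall>j<n. Q j (xs ! j) \<Longrightarrow> F xs = 0"
    and xs: "length xs = n" "\<forall>j<n. R j (xs ! j)"
  shows "F xs = 0"
proof -
  have first_slots_generated: "F xs = 0"
    if "k \<le> n" "length xs = n" "\<forall>j<k. R j (xs ! j)" "\<forall>j. k \<le> j \<and> j < n \<longrightarrow> Q j (xs ! j)"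
    for k xs
    using that
  proof (induction k arbitrary: xs)
    case 0
    then show ?case using vanish by simp
  next
    case (Suc k)
    obtain S f where S: "finite S" "\<forall>s\<in>S. Q k (f s)" "xs ! k = sum f (S :: 'i set)"
      using generated[of k "xs ! k"] Suc.prems by auto
    have "F (xs[k := f s]) = 0" if "s \<in> S" for s
      using Suc.prems S that by (intro Suc.IH) (auto simp: nth_list_update)
    moreover have "F xs = F (xs[k := sum f S])"
      by (simp add: S(3)[symmetric])
    ultimately show ?case
      using sum_in_slot[of F xs k f S] add Suc.prems by simp
  qed
  show ?thesis using first_slots_generated[of n xs] xs by (simp add: not_le[symmetric])
qed

section \<open>Bubble sort of boolean patterns\<close>

definition adj_swap :: "nat \<Rightarrow> 'a list \<Rightarrow> 'a list" where
  "adj_swap j xs = xs[j := xs ! (j + 1), j + 1 := xs ! j]"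

lemma length_adj_swap [simp]: "length (adj_swap j xs) = length xs"
  by (simp add: adj_swap_def)

lemma nth_adj_swap:
  assumes "j + 1 < length xs" and "i < length xs"
  shows "adj_swap j xs ! i = (if i = j then xs ! (j + 1) else if i = j + 1 then xs ! j else xs ! i)"
  using assms by (simp add: adj_swap_def nth_list_update)

definition true_index_sum :: "bool list \<Rightarrow> nat" where
  "true_index_sum ts = (\<Sum>k<length ts. if ts ! k then k else 0)"

lemma true_index_sum_adj_swap_less:
  assumes j: "j + 1 < length ts" and "\<not> ts ! j" and "ts ! (j + 1)"
  shows "true_index_sum (adj_swap j ts) < true_index_sum ts"
proof -
  define w where "w us k = (if us ! k then k else 0)" for us k
  let ?rest = "{..<length ts} - {j, j + 1}"
  have split: "(\<Sum>k<length ts. w us k) = w us j + w us (j + 1) + (\<Sum>k\<in>?rest. w us k)" for us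
  proof -
    have "{..<length ts} = insert j (insert (j + 1) ?rest)"
      using j by auto
    then have "(\<Sum>k<length ts. w us k) = (\<Sum>k\<in>insert j (insert (j + 1) ?rest). w us k)"
      by (rule arg_cong)
    then show ?thesis by simp
  qed
  have "(\<Sum>k\<in>?rest. w (adj_swap j ts) k) = (\<Sum>k\<in>?rest. w ts k)"
    using j by (intro sum.cong) (auto simp: w_def nth_adj_swap)
  moreover have "w (adj_swap j ts) j + w (adj_swap j ts) (j + 1) < w ts j + w ts (j + 1)"
    using assms by (simp add: w_def nth_adj_swap)
  ultimately show ?thesis
    unfolding true_index_sum_def w_def[symmetric] by (simp add: split)
qed

lemma no_ascent_imp_replicate:
  assumes "\<forall>j. j + 1 < length ts \<longrightarrow> ts ! (j + 1) \<longrightarrow> ts ! j"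
  shows "\<exists>i\<le>length ts. ts = replicate i True @ replicate (length ts - i) False"
  using assms
proof (induction ts)
  case Nil
  then show ?case by simp
next
  case (Cons t ts)
  then obtain i where i: "i \<le> length ts" "ts = replicate i True @ replicate (length ts - i) False"
    by fastforce
  show ?case
  proof (cases t)
    case True
    then show ?thesis using i by (intro exI[of _ "Suc i"]) auto
  next
    case False
    have "i = 0"
    proof (rule ccontr)
      assume "i \<noteq> 0"
      have "ts ! 0 = (replicate i True @ replicate (length ts - i) False) ! 0"
        using i(2) by (rule arg_cong)
      then have "ts ! 0" "0 < length ts"
        using i(1) \<open>i \<noteq> 0\<close> by (auto simp: nth_append)
      then show False
        using Cons.prems[rule_format, of 0] False by simp
    qed
    then show ?thesis using False i by (intro exI[of _ 0]) auto
  qed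
qed

lemma mixed_bool_list_induct [consumes 3, case_names blocks swap]:
  assumes "length ts = n" and "True \<in> set ts" and "False \<in> set ts"
    and blocks: "\<And>i. 0 < i \<Longrightarrow> i < n \<Longrightarrow> Z (replicate i True @ replicate (n - i) False)"
    and swap: "\<And>ts j. length ts = n \<Longrightarrow> j + 1 < n \<Longrightarrow> \<not> ts ! j \<Longrightarrow> ts ! (j + 1) \<Longrightarrow>
      Z (adj_swap j ts) \<Longrightarrow> Z ts"
  shows "Z ts"
  using assms(1-3)
proof (induction ts rule: measure_induct_rule[where f = true_index_sum])
  case (less ts)
  show ?case
  proof (cases "\<exists>j. j + 1 < n \<and> \<not> ts ! j \<and> ts ! (j + 1)")
    case True
    then obtain j where j: "j + 1 < n" "\<not> ts ! j" "ts ! (j + 1)"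
      by blast
    have "adj_swap j ts ! j" "\<not> adj_swap j ts ! (j + 1)"
      using j less.prems by (simp_all add: nth_adj_swap)
    then have "True \<in> set (adj_swap j ts)" "False \<in> set (adj_swap j ts)"
      using nth_mem[of j "adj_swap j ts"] nth_mem[of "j + 1" "adj_swap j ts"] j less.prems
      by auto
    then have "Z (adj_swap j ts)"
      using j less.prems true_index_sum_adj_swap_less[of j ts] by (intro less.IH) auto
    then show ?thesis
      using swap j less.prems by blast
  next
    case False
    then obtain i where i: "i \<le> n" "ts = replicate i True @ replicate (n - i) False"
      using no_ascent_imp_replicate[of ts] less.prems by auto
    moreover have "0 < i" "i < n"
      using less.prems i by (auto intro: Nat.gr0I)
    ultimately show ?thesis
      using blocks by simp
  qed
qed

lemma set_take_drop_blocks: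
  assumes "\<forall>j<length xs. xs ! j \<in> (if j < i then A else B)"
  shows "set (take i xs) \<subseteq> A" and "set (drop i xs) \<subseteq> B"
proof
  fix x
  assume "x \<in> set (take i xs)"
  then obtain k where "k < i" "k < length xs" "x = xs ! k"
    by (auto simp: in_set_conv_nth)
  then show "x \<in> A"
    using assms by auto
next
  show "set (drop i xs) \<subseteq> B"
  proof
    fix x
    assume "x \<in> set (drop i xs)"
    then obtain k where "k < length xs - i" "x = xs ! (i + k)"
      by (auto simp: in_set_conv_nth)
    then show "x \<in> B"
      using assms[rule_format, of "i + k"] by simp
  qed
qed

locale n_hom_lie_color =
  fixes scale :: "'k::field_char_0 \<Rightarrow> 'v::ab_group_add \<Rightarrow> 'v"
    and G :: "'g::ab_group_add \<Rightarrow> 'v set"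
    and n :: nat
    and br :: "'v list \<Rightarrow> 'v"
    and eps :: "'g \<Rightarrow> 'g \<Rightarrow> 'k"
    and \<alpha> :: "'v \<Rightarrow> 'v"
  assumes n_pos: "0 < n"
    and hom_lie_color: "n_Hom_Lie_color_algebra scale G n br eps \<alpha>"
begin

lemma graded: "graded_space scale G"
  using hom_lie_color unfolding n_Hom_Lie_color_algebra_def by blast

sublocale V: vector_space scale
  using graded unfolding graded_space_def by blast

lemma subspace_G: "V.subspace (G a)"
  using graded unfolding graded_space_def by blast

lemma linear_alpha: "Vector_Spaces.linear scale scale \<alpha>"
  using hom_lie_color unfolding n_Hom_Lie_color_algebra_def deg0_linear_def by blast

lemma br_add: "length xs = n \<Longrightarrow> i < n \<Longrightarrow> br (xs[i := x + y]) = br (xs[i := x]) + br (xs[i := y])"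
  using hom_lie_color unfolding n_Hom_Lie_color_algebra_def by blast

lemma br_scale: "length xs = n \<Longrightarrow> i < n \<Longrightarrow> br (xs[i := scale c x]) = scale c (br (xs[i := x]))"
  using hom_lie_color unfolding n_Hom_Lie_color_algebra_def by blast

lemma br_neg: "length xs = n \<Longrightarrow> i < n \<Longrightarrow> br (xs[i := - x]) = - br (xs[i := x])"
  using br_scale[of xs i "-1" x] by simp

lemma br_adj_swap:
  assumes "length xs = n" and "length ds = n" and "\<forall>i<n. xs ! i \<in> G (ds ! i)" and "j + 1 < n"
  shows "br xs = - scale (eps (ds ! j) (ds ! (j + 1))) (br (adj_swap j xs))"
  using hom_lie_color assms unfolding n_Hom_Lie_color_algebra_def adj_swap_def by blast

lemma obtain_degrees:
  assumes "\<forall>i<n. \<exists>d. xs ! i \<in> G d"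
  obtains ds where "length ds = n" and "\<forall>i<n. xs ! i \<in> G (ds ! i)"
proof -
  obtain D where "\<forall>i<n. xs ! i \<in> G (D i)"
    using assms by metis
  then show thesis
    by (intro that[of "map D [0..<n]"]) auto
qed

lemma scale_half_double: "scale (1 / 2) (x + x) = (x :: 'v)"
proof -
  have "scale (1 / 2) (x + x) = scale (1 / 2 + 1 / 2) x"
    by (simp only: V.scale_left_distrib V.scale_right_distrib)
  then show ?thesis
    by simp
qed

lemma self_eq_neg_iff: "(x :: 'v) = - x \<longleftrightarrow> x = 0"
proof
  assume "x = - x"
  then have "x + x = 0"
    by (metis add.right_inverse)
  then show "x = 0"
    using scale_half_double[of x] by simp
qed simp

definition decomposition :: "('g \<Rightarrow> 'v) \<Rightarrow> 'v \<Rightarrow> bool" where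
  "decomposition f v \<longleftrightarrow>
     finite {a. f a \<noteq> 0} \<and> (\<forall>a. f a \<in> G a) \<and> v = (\<Sum>a\<in>{a. f a \<noteq> 0}. f a)"

lemma decomposition_exists: "\<exists>f. decomposition f v"
  using graded unfolding graded_space_def decomposition_def by blast

lemma decomposition_sum:
  assumes "decomposition f v" and "finite U" and "{a. f a \<noteq> 0} \<subseteq> U"
  shows "v = sum f U"
  using assms sum_over_support unfolding decomposition_def by metis

lemma decompositionI:
  assumes "finite U" and "{a. f a \<noteq> 0} \<subseteq> U" and "\<forall>a. f a \<in> G a" and "v = sum f U"
  shows "decomposition f v"
  using assms finite_subset sum_over_support unfolding decomposition_def by metis

lemma decomposition_add:
  assumes f: "decomposition f v" and g: "decomposition g w"
  shows "decomposition (\<lambda>a. f a + g a) (v + w)"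
proof -
  let ?U = "{a. f a \<noteq> 0} \<union> {a. g a \<noteq> 0}"
  have U: "finite ?U"
    using f g unfolding decomposition_def by simp
  have "v + w = (\<Sum>a\<in>?U. f a + g a)"
    using decomposition_sum[OF f U] decomposition_sum[OF g U] by (simp add: sum.distrib)
  then show ?thesis
    using U f g subspace_G V.subspace_add
    by (intro decompositionI[of ?U]) (auto simp: decomposition_def)
qed

lemma decomposition_map:
  assumes Q: "deg0_linear scale G Q" and f: "decomposition f v"
  shows "decomposition (\<lambda>a. Q (f a)) (Q v)"
proof -
  interpret Q: Vector_Spaces.linear scale scale Q
    using Q unfolding deg0_linear_def by blast
  have "Q v = (\<Sum>a\<in>{a. f a \<noteq> 0}. Q (f a))"
    using f unfolding decomposition_def by (simp add: Q.sum)
  then show ?thesis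
    using f Q by (intro decompositionI[of "{a. f a \<noteq> 0}"]) (auto simp: decomposition_def deg0_linear_def)
qed

lemma decomposition_zero:
  assumes "decomposition f 0"
  shows "f a = 0"
proof -
  have "finite {a. f a \<noteq> 0}" "\<forall>a. f a \<in> G a" "(\<Sum>a\<in>{a. f a \<noteq> 0}. f a) = 0"
    using assms unfolding decomposition_def by auto
  then show ?thesis
    using graded unfolding graded_space_def by blast
qed

lemma decomposition_unique:
  assumes f: "decomposition f v" and g: "decomposition g v"
  shows "f = g"
proof -
  have "deg0_linear scale G (scale (- 1))"
    using subspace_G V.subspace_neg unfolding deg0_linear_def by auto
  from decomposition_add[OF f decomposition_map[OF this g]]
  have "decomposition (\<lambda>a. f a - g a) 0"
    by simp
  then show ?thesis
    using decomposition_zero[of "\<lambda>a. f a - g a"] by (auto simp: fun_eq_iff)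
qed

lemma decomposition_homogeneous:
  assumes "v \<in> G \<gamma>"
  shows "decomposition (\<lambda>a. if a = \<gamma> then v else 0) v"
  using assms subspace_G V.subspace_0 by (intro decompositionI[of "{\<gamma>}"]) auto

definition graded_subspace :: "'v set \<Rightarrow> bool" where
  "graded_subspace h \<longleftrightarrow> V.subspace h \<and> (\<forall>v\<in>h. \<exists>f. decomposition f v \<and> (\<forall>a. f a \<in> h))"

lemma graded_subalgebra_iff:
  "graded_subalgebra scale G n br \<alpha> h \<longleftrightarrow>
     graded_subspace h \<and> \<alpha> ` h \<subseteq> h \<and> (\<forall>xs. length xs = n \<and> set xs \<subseteq> h \<longrightarrow> br xs \<in> h)"
  unfolding graded_subalgebra_def graded_subspace_def decomposition_def
  by (simp add: all_conj_distrib conj_commute conj_left_commute)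

lemma graded_subspace_UNIV: "graded_subspace UNIV"
  using decomposition_exists unfolding graded_subspace_def by simp

lemma graded_subspace_homogeneous_sum:
  assumes "graded_subspace h" and "v \<in> h"
  shows "\<exists>S f. finite S \<and> (\<forall>s\<in>S. f s \<in> h \<and> (\<exists>d. f s \<in> G d)) \<and> v = sum f (S :: 'g set)"
proof -
  obtain f where "decomposition f v" "\<forall>a. f a \<in> h"
    using assms unfolding graded_subspace_def by blast
  then show ?thesis
    by (intro exI[of _ "{a. f a \<noteq> 0}"] exI[of _ f]) (auto simp: decomposition_def)
qed

subsection \<open>Complementary subspaces and reflections\<close>

(* Meaningful only when every vector splits uniquely as a + b with a in A and b in B. *)
definition reflection :: "'v set \<Rightarrow> 'v set \<Rightarrow> 'v \<Rightarrow> 'v" where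
  "reflection A B v = (THE w. \<exists>a\<in>A. \<exists>b\<in>B. v = a + b \<and> w = a - b)"

definition complementary_subspaces :: "'v set \<Rightarrow> 'v set \<Rightarrow> bool" where
  "complementary_subspaces A B \<longleftrightarrow>
     V.subspace A \<and> V.subspace B \<and> A \<inter> B = {0} \<and> (\<forall>v. \<exists>a\<in>A. \<exists>b\<in>B. v = a + b)"

lemma complementary_subspaces_unique:
  assumes AB: "complementary_subspaces A B" and "a \<in> A" "b \<in> B" "a' \<in> A" "b' \<in> B"
    and "a + b = a' + b'"
  shows "a = a'" and "b = b'"
proof -
  have "a - a' = b' - b"
    using \<open>a + b = a' + b'\<close> by (simp add: algebra_simps)
  moreover have "a - a' \<in> A" "b' - b \<in> B"
    using AB assms(2-5) V.subspace_diff unfolding complementary_subspaces_def by blast+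
  ultimately have "b' - b \<in> A \<inter> B"
    by simp
  then have "b' - b = 0"
    using AB unfolding complementary_subspaces_def by blast
  then show "a = a'" "b = b'"
    using \<open>a - a' = b' - b\<close> by simp_all
qed

lemma reflection_add:
  assumes AB: "complementary_subspaces A B" and "a \<in> A" "b \<in> B"
  shows "reflection A B (a + b) = a - b"
  unfolding reflection_def
proof (rule the_equality)
  show "\<exists>a'\<in>A. \<exists>b'\<in>B. a + b = a' + b' \<and> a - b = a' - b'"
    using assms by blast
  show "w = a - b" if "\<exists>a'\<in>A. \<exists>b'\<in>B. a + b = a' + b' \<and> w = a' - b'" for w
    using that complementary_subspaces_unique[OF AB \<open>a \<in> A\<close> \<open>b \<in> B\<close>] by blast
qed

lemma reflection_fixes: "complementary_subspaces A B \<Longrightarrow> a \<in> A \<Longrightarrow> reflection A B a = a"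
  using reflection_add[of A B a 0] V.subspace_0 unfolding complementary_subspaces_def by simp

lemma reflection_negates: "complementary_subspaces A B \<Longrightarrow> b \<in> B \<Longrightarrow> reflection A B b = - b"
  using reflection_add[of A B 0 b] V.subspace_0 unfolding complementary_subspaces_def by simp

lemma linear_reflection:
  assumes AB: "complementary_subspaces A B"
  shows "Vector_Spaces.linear scale scale (reflection A B)"
  unfolding Vector_Spaces.linear_iff
proof (intro conjI allI)
  have subspaces: "V.subspace A" "V.subspace B"
    using AB unfolding complementary_subspaces_def by blast+
  fix x y c
  obtain a b where ab: "a \<in> A" "b \<in> B" "x = a + b"
    using AB unfolding complementary_subspaces_def by blast
  obtain a' b' where ab': "a' \<in> A" "b' \<in> B" "y = a' + b'"
    using AB unfolding complementary_subspaces_def by blast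
  have x: "reflection A B x = a - b" and y: "reflection A B y = a' - b'"
    using ab ab' reflection_add[OF AB] by simp_all
  have "x + y = (a + a') + (b + b')"
    using ab ab' by (simp add: algebra_simps)
  moreover have "a + a' \<in> A" "b + b' \<in> B"
    using ab ab' subspaces V.subspace_add by blast+
  ultimately have "reflection A B (x + y) = (a + a') - (b + b')"
    using reflection_add[OF AB] by simp
  then show "reflection A B (x + y) = reflection A B x + reflection A B y"
    unfolding x y by (simp add: algebra_simps)
  have "scale c x = scale c a + scale c b"
    using ab by (simp add: V.scale_right_distrib)
  moreover have "scale c a \<in> A" "scale c b \<in> B"
    using ab subspaces V.subspace_scale by blast+
  ultimately have "reflection A B (scale c x) = scale c a - scale c b"
    using reflection_add[OF AB] by simp
  then show "reflection A B (scale c x) = scale c (reflection A B x)"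
    unfolding x by (simp add: V.scale_right_diff_distrib)
qed (fact V.vector_space_axioms)+

lemma reflection_involutive:
  assumes AB: "complementary_subspaces A B"
  shows "reflection A B \<circ> reflection A B = id"
proof
  fix v
  obtain a b where ab: "a \<in> A" "b \<in> B" "v = a + b"
    using AB unfolding complementary_subspaces_def by blast
  then have "- b \<in> B"
    using AB V.subspace_neg unfolding complementary_subspaces_def by blast
  then show "(reflection A B \<circ> reflection A B) v = id v"
    using ab reflection_add[OF AB] reflection_add[OF AB \<open>a \<in> A\<close> \<open>- b \<in> B\<close>] by simp
qed

lemma reflection_neq_id:
  assumes AB: "complementary_subspaces A B" and "B \<noteq> {0}"
  shows "reflection A B \<noteq> id"
proof
  assume "reflection A B = id"
  obtain b where "b \<in> B" "b \<noteq> 0"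
    using \<open>B \<noteq> {0}\<close> AB V.subspace_0 unfolding complementary_subspaces_def by blast
  then show False
    using reflection_negates[OF AB] \<open>reflection A B = id\<close> self_eq_neg_iff by (metis id_apply)
qed

lemma reflection_neq_uminus:
  assumes AB: "complementary_subspaces A B" and "A \<noteq> {0}"
  shows "reflection A B \<noteq> (\<lambda>x. - x)"
proof
  assume "reflection A B = (\<lambda>x. - x)"
  obtain a where "a \<in> A" "a \<noteq> 0"
    using \<open>A \<noteq> {0}\<close> AB V.subspace_0 unfolding complementary_subspaces_def by blast
  then show False
    using reflection_fixes[OF AB] \<open>reflection A B = (\<lambda>x. - x)\<close> self_eq_neg_iff by metis
qed

lemma reflection_commute:
  assumes AB: "complementary_subspaces A B" and f: "Vector_Spaces.linear scale scale f"
    and "f ` A \<subseteq> A" and "f ` B \<subseteq> B"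
  shows "reflection A B \<circ> f = f \<circ> reflection A B"
proof
  interpret f: Vector_Spaces.linear scale scale f by (rule f)
  fix v
  obtain a b where ab: "a \<in> A" "b \<in> B" "v = a + b"
    using AB unfolding complementary_subspaces_def by blast
  moreover have "f a \<in> A" "f b \<in> B"
    using ab assms(3,4) by blast+
  ultimately show "(reflection A B \<circ> f) v = (f \<circ> reflection A B) v"
    using reflection_add[OF AB] by (simp add: f.add f.diff)
qed

lemma involution_eigenspaces_complementary:
  assumes P: "Vector_Spaces.linear scale scale P" and PP: "P \<circ> P = id"
  shows "complementary_subspaces {x. P x = x} {x. P x = - x}"
  unfolding complementary_subspaces_def
proof (intro conjI allI)
  interpret P: Vector_Spaces.linear scale scale P by (rule P)
  show "V.subspace {x. P x = x}" "V.subspace {x. P x = - x}"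
    unfolding V.subspace_def by (auto simp: P.zero P.add P.scale)
  have "x = 0" if "P x = x" and "P x = - x" for x
    using that self_eq_neg_iff[of x] by simp
  then show "{x. P x = x} \<inter> {x. P x = - x} = {0}"
    by (auto simp: P.zero)
  fix v
  let ?a = "scale (1 / 2) (v + P v)" and ?b = "scale (1 / 2) (v - P v)"
  have "?a + ?b = scale (1 / 2) ((v + P v) + (v - P v))"
    by (simp only: V.scale_right_distrib)
  also have "(v + P v) + (v - P v) = v + v"
    by simp
  finally have "v = ?a + ?b"
    using scale_half_double[of v] by simp
  moreover have "P ?a = ?a"
    using PP by (simp add: P.add P.scale pointfree_idE add.commute)
  moreover have "P ?b = - ?b"
    using PP by (simp add: P.diff P.scale pointfree_idE flip: V.scale_minus_right)
  ultimately show "\<exists>a\<in>{x. P x = x}. \<exists>b\<in>{x. P x = - x}. v = a + b"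
    by blast
qed

lemma involution_fixed_space_nonzero:
  assumes P: "Vector_Spaces.linear scale scale P" and PP: "P \<circ> P = id" and "P \<noteq> (\<lambda>x. - x)"
  shows "{x. P x = x} \<noteq> {0}"
proof -
  interpret P: Vector_Spaces.linear scale scale P by (rule P)
  obtain x where x: "P x \<noteq> - x"
    using assms(3) by (auto simp: fun_eq_iff)
  have "P (x + P x) = x + P x"
    using PP by (simp add: P.add add.commute pointfree_idE)
  moreover have "x + P x \<noteq> 0"
    using x by (metis minus_unique)
  ultimately show ?thesis
    by blast
qed

lemma involution_anti_fixed_space_nonzero:
  assumes P: "Vector_Spaces.linear scale scale P" and PP: "P \<circ> P = id" and "P \<noteq> id"
  shows "{x. P x = - x} \<noteq> {0}"
proof -
  interpret P: Vector_Spaces.linear scale scale P by (rule P)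
  obtain x where x: "P x \<noteq> x"
    using assms(3) by (auto simp: fun_eq_iff)
  have "P (x - P x) = - (x - P x)"
    using PP by (simp add: P.diff pointfree_idE)
  moreover have "x - P x \<noteq> 0"
    using x by simp
  ultimately show ?thesis
    by blast
qed

lemma graded_subspace_eigenspace:
  assumes Q: "deg0_linear scale G Q"
  shows "graded_subspace {x. Q x = scale c x}"
proof -
  interpret Q: Vector_Spaces.linear scale scale Q
    using Q unfolding deg0_linear_def by blast
  have scale_c: "deg0_linear scale G (scale c)"
    using subspace_G V.subspace_scale unfolding deg0_linear_def by auto
  have "\<exists>f. decomposition f v \<and> (\<forall>a. Q (f a) = scale c (f a))" if "Q v = scale c v" for v
  proof -
    obtain f where f: "decomposition f v"
      using decomposition_exists by blast
    have "decomposition (\<lambda>a. Q (f a)) (scale c v)" "decomposition (\<lambda>a. scale c (f a)) (scale c v)"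
      using decomposition_map[OF Q f] decomposition_map[OF scale_c f] that by simp_all
    then have "(\<lambda>a. Q (f a)) = (\<lambda>a. scale c (f a))"
      by (rule decomposition_unique)
    then show ?thesis
      using f by (intro exI[of _ f]) (simp add: fun_eq_iff)
  qed
  moreover have "V.subspace {x. Q x = scale c x}"
    unfolding V.subspace_def by (auto simp: Q.add Q.scale V.scale_right_distrib mult.commute)
  ultimately show ?thesis
    unfolding graded_subspace_def by auto
qed

lemma graded_direct_summand_homogeneous:
  assumes A: "graded_subspace A" and B: "graded_subspace B" and AB: "A \<inter> B = {0}"
    and a: "a \<in> A" and b: "b \<in> B" and ab: "a + b \<in> G \<gamma>"
  shows "a \<in> G \<gamma>"
proof -
  obtain fa where fa: "decomposition fa a" "\<forall>c. fa c \<in> A"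
    using A a unfolding graded_subspace_def by blast
  obtain fb where fb: "decomposition fb b" "\<forall>c. fb c \<in> B"
    using B b unfolding graded_subspace_def by blast
  have "(\<lambda>c. fa c + fb c) = (\<lambda>c. if c = \<gamma> then a + b else 0)"
    using decomposition_add[OF fa(1) fb(1)] decomposition_homogeneous[OF ab]
    by (rule decomposition_unique)
  then have "fa c = - fb c" if "c \<noteq> \<gamma>" for c
    using fun_cong[of _ _ c] that by (fastforce simp: eq_neg_iff_add_eq_0)
  moreover have "V.subspace B"
    using B unfolding graded_subspace_def by blast
  ultimately have "fa c \<in> A \<inter> B" if "c \<noteq> \<gamma>" for c
    using that fa(2) fb(2) V.subspace_neg by (metis IntI)
  then have "fa c = 0" if "c \<noteq> \<gamma>" for c
    using that AB by blast
  then have "a = sum fa {\<gamma>}"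
    using fa(1) by (intro decomposition_sum) auto
  then show ?thesis
    using fa(1) unfolding decomposition_def by simp
qed

lemma reflection_homogeneous:
  assumes AB: "complementary_subspaces A B" and A: "graded_subspace A" and B: "graded_subspace B"
    and v: "v \<in> G \<gamma>"
  shows "reflection A B v \<in> G \<gamma>"
proof -
  obtain a b where ab: "a \<in> A" "b \<in> B" "v = a + b"
    using AB unfolding complementary_subspaces_def by blast
  have "A \<inter> B = {0}" "B \<inter> A = {0}"
    using AB unfolding complementary_subspaces_def by auto
  then have "a \<in> G \<gamma>" "b \<in> G \<gamma>"
    using graded_direct_summand_homogeneous[OF A B _ ab(1,2)] graded_direct_summand_homogeneous[OF B A _ ab(2,1)]
      v ab(3) by (simp_all add: add.commute)
  then show ?thesis
    using ab reflection_add[OF AB] subspace_G V.subspace_diff by simp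
qed

subsection \<open>Centroid maps commute with every slot\<close>

(* One epsilon-swap of the slots j and j + 1 carries P from slot j to slot j + 1; the swap
   factor is the same before and after applying P because P preserves degrees. *)
lemma slot_commute_homogeneous:
  assumes P: "deg0_linear scale G P"
    and slot0: "\<forall>xs. length xs = n \<longrightarrow> P (br xs) = br (xs[0 := P (xs ! 0)])"
  shows "j < n \<Longrightarrow> length xs = n \<Longrightarrow> length ds = n \<Longrightarrow> \<forall>i<n. xs ! i \<in> G (ds ! i) \<Longrightarrow>
    P (br xs) = br (xs[j := P (xs ! j)])"
proof (induction j arbitrary: xs ds)
  case 0
  then show ?case using slot0 by simp
next
  case (Suc j)
  interpret P: Vector_Spaces.linear scale scale P
    using P unfolding deg0_linear_def by blast
  let ?e = "eps (ds ! j) (ds ! (j + 1))"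
  let ?ys = "adj_swap j xs"
  let ?zs = "xs[j + 1 := P (xs ! (j + 1))]"
  have j: "j + 1 < n"
    using Suc.prems by simp
  have "\<forall>i<n. ?ys ! i \<in> G (adj_swap j ds ! i)"
    using Suc.prems j by (simp add: nth_adj_swap)
  then have IH: "P (br ?ys) = br (?ys[j := P (?ys ! j)])"
    using Suc.prems j by (intro Suc.IH[of ?ys "adj_swap j ds"]) auto
  have "\<forall>i<n. ?zs ! i \<in> G (ds ! i)"
    using Suc.prems P unfolding deg0_linear_def by (auto simp: nth_list_update)
  then have "br ?zs = - scale ?e (br (adj_swap j ?zs))"
    using Suc.prems j by (intro br_adj_swap) auto
  also have "adj_swap j ?zs = ?ys[j := P (?ys ! j)]"
    using Suc.prems j by (intro nth_equalityI) (auto simp: nth_adj_swap nth_list_update)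
  finally have "br ?zs = - scale ?e (P (br ?ys))"
    using IH by simp
  also have "\<dots> = P (br xs)"
    using br_adj_swap[of xs ds j] Suc.prems j by (simp add: P.neg P.scale)
  finally show ?case
    by simp
qed

lemma slot_commute_from_generators:
  assumes P: "Vector_Spaces.linear scale scale P"
    and generated: "\<And>v. \<exists>S f. finite S \<and> (\<forall>s\<in>S. f s \<in> X) \<and> v = sum f (S :: 'i set)"
    and commute: "\<And>xs. length xs = n \<Longrightarrow> set xs \<subseteq> X \<Longrightarrow> P (br xs) = br (xs[j := P (xs ! j)])"
    and xs: "length xs = n"
  shows "P (br xs) = br (xs[j := P (xs ! j)])"
proof -
  interpret P: Vector_Spaces.linear scale scale P by (rule P)
  let ?F = "\<lambda>xs. P (br xs) - br (xs[j := P (xs ! j)])"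
  have "?F xs = 0"
  proof (rule multiadditive_eq_0[where F = ?F and R = "\<lambda>_ _. True" and Q = "\<lambda>_ v. v \<in> X"])
    fix xs :: "'v list" and i x y
    assume xs: "length xs = n" and i: "i < n"
    show "?F (xs[i := x + y]) = ?F (xs[i := x]) + ?F (xs[i := y])"
    proof (cases "i = j")
      case True
      then show ?thesis
        using xs i br_add[of xs j] br_add[of xs j "P x" "P y"] by (simp add: P.add)
    next
      case False
      then show ?thesis
        using xs i br_add[of xs i x y] br_add[of "xs[j := P (xs ! j)]" i x y]
        by (simp add: list_update_swap[of i j] P.add)
    qed
  next
    fix xs :: "'v list"
    assume "length xs = n" and "\<forall>i<n. xs ! i \<in> X"
    moreover from this have "set xs \<subseteq> X"
      by (auto simp: in_set_conv_nth)
    ultimately show "?F xs = 0"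
      using commute by simp
  qed (use generated xs in simp_all)
  then show ?thesis
    by simp
qed

lemma slot_commute:
  assumes P: "deg0_linear scale G P"
    and slot0: "\<forall>xs. length xs = n \<longrightarrow> P (br xs) = br (xs[0 := P (xs ! 0)])"
    and "j < n" and "length xs = n"
  shows "P (br xs) = br (xs[j := P (xs ! j)])"
proof (rule slot_commute_from_generators[where X = "{v. \<exists>d. v \<in> G d}"])
  show "Vector_Spaces.linear scale scale P"
    using P unfolding deg0_linear_def by blast
  show "\<exists>S f. finite S \<and> (\<forall>s\<in>S. f s \<in> {v. \<exists>d. v \<in> G d}) \<and> v = sum f (S :: 'g set)" for v
    using graded_subspace_homogeneous_sum[OF graded_subspace_UNIV, of v] by simp
  fix xs :: "'v list"
  assume xs: "length xs = n" and "set xs \<subseteq> {v. \<exists>d. v \<in> G d}"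
  then obtain ds where "length ds = n" "\<forall>i<n. xs ! i \<in> G (ds ! i)"
    using obtain_degrees[of xs] by (auto simp: subset_iff)
  then show "P (br xs) = br (xs[j := P (xs ! j)])"
    using slot_commute_homogeneous[OF P slot0 \<open>j < n\<close> xs] by simp
qed fact+

definition mixed_brackets_vanish :: "'v set \<Rightarrow> 'v set \<Rightarrow> bool" where
  "mixed_brackets_vanish A B \<longleftrightarrow>
     (\<forall>i. 1 \<le> i \<and> i \<le> n - 1 \<longrightarrow>
        (\<forall>as bs. length as = i \<and> set as \<subseteq> A \<and> length bs = n - i \<and> set bs \<subseteq> B
           \<longrightarrow> br (as @ bs) = 0))"

definition product_decomposition :: "'v set \<Rightarrow> 'v set \<Rightarrow> bool" where
  "product_decomposition A B \<longleftrightarrow>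
     graded_subalgebra scale G n br \<alpha> A \<and> graded_subalgebra scale G n br \<alpha> B \<and>
     A \<noteq> {0} \<and> B \<noteq> {0} \<and> A \<inter> B = {0} \<and> (\<forall>v. \<exists>a\<in>A. \<exists>b\<in>B. v = a + b) \<and>
     mixed_brackets_vanish A B"

lemma graded_subalgebra_centroid_eigenspace:
  assumes "centroid scale G n br \<alpha> P"
  shows "graded_subalgebra scale G n br \<alpha> {x. P x = scale c x}"
proof -
  have P: "deg0_linear scale G P" and P_alpha: "P \<circ> \<alpha> = \<alpha> \<circ> P"
    and slot0: "\<forall>xs. length xs = n \<longrightarrow> P (br xs) = br (xs[0 := P (xs ! 0)])"
    using assms unfolding centroid_def by blast+
  interpret A: Vector_Spaces.linear scale scale \<alpha> by (rule linear_alpha)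
  have "P (\<alpha> x) = scale c (\<alpha> x)" if "P x = scale c x" for x
    using that P_alpha by (metis A.scale comp_apply)
  moreover have "P (br xs) = scale c (br xs)" if "length xs = n" "set xs \<subseteq> {x. P x = scale c x}" for xs
  proof -
    have "P (xs ! 0) = scale c (xs ! 0)"
      using that n_pos by (auto simp: subset_iff)
    then show ?thesis
      using slot0 br_scale[of xs 0 c "xs ! 0"] that n_pos by simp
  qed
  ultimately show ?thesis
    unfolding graded_subalgebra_iff using graded_subspace_eigenspace[OF P] by blast
qed

lemma centroid_mixed_brackets_vanish:
  assumes P: "deg0_linear scale G P"
    and slot0: "\<forall>xs. length xs = n \<longrightarrow> P (br xs) = br (xs[0 := P (xs ! 0)])"
  shows "mixed_brackets_vanish {x. P x = x} {x. P x = - x}"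
  unfolding mixed_brackets_vanish_def
proof (intro allI impI)
  fix i as bs
  assume i: "1 \<le> i \<and> i \<le> n - 1"
    and as_bs: "length as = i \<and> set as \<subseteq> {x. P x = x} \<and> length bs = n - i \<and> set bs \<subseteq> {x. P x = - x}"
  let ?xs = "as @ bs"
  have len: "length ?xs = n" and last: "n - 1 < n"
    using i as_bs n_pos by auto
  have "?xs ! 0 = as ! 0" and "as ! 0 \<in> set as"
    using i as_bs by (simp_all add: nth_append)
  then have "P (?xs ! 0) = ?xs ! 0"
    using as_bs by auto
  then have "P (br ?xs) = br ?xs"
    using slot_commute[OF P slot0 n_pos len] by simp
  moreover have "n - 1 - i < length bs"
    using i as_bs by linarith
  then have "?xs ! (n - 1) = bs ! (n - 1 - i)" and "bs ! (n - 1 - i) \<in> set bs"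
    using i as_bs by (simp_all add: nth_append)
  then have "P (?xs ! (n - 1)) = - (?xs ! (n - 1))"
    using as_bs by auto
  then have "P (br ?xs) = - br ?xs"
    using slot_commute[OF P slot0 last len] br_neg[OF len last] by simp
  ultimately have "br ?xs = - br ?xs"
    by simp
  then show "br ?xs = 0"
    by (simp only: self_eq_neg_iff)
qed

lemma strict_product_structure_eigenspaces:
  assumes "strict_product_structure scale G n br \<alpha> P"
  shows "product_decomposition {x. P x = x} {x. P x = - x}"
proof -
  have P: "deg0_linear scale G P" and "P \<noteq> id" "P \<noteq> (\<lambda>x. - x)" "P \<circ> P = id"
    and centroid: "centroid scale G n br \<alpha> P"
    using assms unfolding strict_product_structure_def almost_product_structure_def by blast+
  have linear: "Vector_Spaces.linear scale scale P"
    using P unfolding deg0_linear_def by blast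
  have slot0: "\<forall>xs. length xs = n \<longrightarrow> P (br xs) = br (xs[0 := P (xs ! 0)])"
    using centroid unfolding centroid_def by blast
  have "graded_subalgebra scale G n br \<alpha> {x. P x = x}"
    using graded_subalgebra_centroid_eigenspace[OF centroid, of 1] by simp
  moreover have "graded_subalgebra scale G n br \<alpha> {x. P x = - x}"
    using graded_subalgebra_centroid_eigenspace[OF centroid, of "- 1"] by simp
  ultimately show ?thesis
    unfolding product_decomposition_def
    using involution_eigenspaces_complementary[OF linear \<open>P \<circ> P = id\<close>]
      involution_fixed_space_nonzero[OF linear \<open>P \<circ> P = id\<close> \<open>P \<noteq> (\<lambda>x. - x)\<close>]
      involution_anti_fixed_space_nonzero[OF linear \<open>P \<circ> P = id\<close> \<open>P \<noteq> id\<close>]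
      centroid_mixed_brackets_vanish[OF P slot0]
    unfolding complementary_subspaces_def by blast
qed

lemma mixed_homogeneous_bracket_vanishes:
  assumes mixed: "mixed_brackets_vanish A B"
    and ts: "length ts = n" "True \<in> set ts" "False \<in> set ts"
  shows "\<forall>xs. length xs = n \<longrightarrow> (\<forall>j<n. xs ! j \<in> (if ts ! j then A else B) \<and> (\<exists>d. xs ! j \<in> G d))
      \<longrightarrow> br xs = 0"
  using ts
proof (induct ts rule: mixed_bool_list_induct)
  case (blocks i)
  show ?case
  proof (intro allI impI)
    fix xs
    assume xs: "length xs = n"
      and in_AB: "\<forall>j<n. xs ! j \<in> (if (replicate i True @ replicate (n - i) False) ! j then A else B) \<and>
        (\<exists>d. xs ! j \<in> G d)"
    have "\<forall>j<length xs. xs ! j \<in> (if j < i then A else B)"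
      using in_AB xs blocks by (auto simp: nth_append split: if_splits)
    from set_take_drop_blocks[OF this] have "set (take i xs) \<subseteq> A" and "set (drop i xs) \<subseteq> B" .
    moreover have "length (take i xs) = i" "length (drop i xs) = n - i" "1 \<le> i \<and> i \<le> n - 1"
      using xs blocks by auto
    ultimately have "br (take i xs @ drop i xs) = 0"
      using mixed unfolding mixed_brackets_vanish_def by blast
    then show "br xs = 0"
      by simp
  qed
next
  case (swap ts j)
  show ?case
  proof (intro allI impI)
    fix xs
    assume xs: "length xs = n"
      and in_AB: "\<forall>k<n. xs ! k \<in> (if ts ! k then A else B) \<and> (\<exists>d. xs ! k \<in> G d)"
    obtain ds where ds: "length ds = n" "\<forall>k<n. xs ! k \<in> G (ds ! k)"
      using in_AB obtain_degrees by blast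
    have "adj_swap j xs ! k \<in> (if adj_swap j ts ! k then A else B) \<and> (\<exists>d. adj_swap j xs ! k \<in> G d)"
      if "k < n" for k
      using in_AB[rule_format, of k] in_AB[rule_format, of j] in_AB[rule_format, of "j + 1"]
        that swap.hyps(1,2) xs
      by (auto simp: nth_adj_swap)
    then have "br (adj_swap j xs) = 0"
      using swap.hyps(5) xs by simp
    then show "br xs = 0"
      using br_adj_swap[OF xs ds swap.hyps(2)] by simp
  qed
qed

lemma mixed_bracket_vanishes:
  assumes A: "graded_subspace A" and B: "graded_subspace B" and mixed: "mixed_brackets_vanish A B"
    and ts: "length ts = n" "True \<in> set ts" "False \<in> set ts"
    and xs: "length xs = n" "\<forall>j<n. xs ! j \<in> (if ts ! j then A else B)"
  shows "br xs = 0"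
proof (rule multiadditive_eq_0[where F = br and R = "\<lambda>j v. v \<in> (if ts ! j then A else B)"
      and Q = "\<lambda>j v. v \<in> (if ts ! j then A else B) \<and> (\<exists>d. v \<in> G d)"])
  fix xs :: "'v list" and i x y
  assume "length xs = n" and "i < n"
  then show "br (xs[i := x + y]) = br (xs[i := x]) + br (xs[i := y])"
    by (rule br_add)
next
  fix j v
  assume "v \<in> (if ts ! j then A else B)"
  then show "\<exists>S f. finite S \<and> (\<forall>s\<in>S. f s \<in> (if ts ! j then A else B) \<and> (\<exists>d. f s \<in> G d)) \<and>
      v = sum f (S :: 'g set)"
    using graded_subspace_homogeneous_sum[OF A] graded_subspace_homogeneous_sum[OF B]
    by (cases "ts ! j") simp_all
next
  fix xs :: "'v list"
  assume "length xs = n" and "\<forall>j<n. xs ! j \<in> (if ts ! j then A else B) \<and> (\<exists>d. xs ! j \<in> G d)"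
  then show "br xs = 0"
    using mixed_homogeneous_bracket_vanishes[OF mixed ts] by blast
qed (use xs in simp_all)

lemma product_decomposition_complementary:
  "product_decomposition A B \<Longrightarrow> complementary_subspaces A B"
  unfolding product_decomposition_def complementary_subspaces_def graded_subalgebra_def by blast

lemma bracket_in_summands:
  assumes A: "graded_subalgebra scale G n br \<alpha> A" and B: "graded_subalgebra scale G n br \<alpha> B"
    and mixed: "mixed_brackets_vanish A B"
    and xs: "length xs = n" "set xs \<subseteq> A \<union> B"
  shows "br xs \<in> (if xs ! 0 \<in> A then A else B)"
proof -
  have graded: "graded_subspace A" "graded_subspace B"
    and closed: "\<And>ys. length ys = n \<Longrightarrow> set ys \<subseteq> A \<Longrightarrow> br ys \<in> A"
      "\<And>ys. length ys = n \<Longrightarrow> set ys \<subseteq> B \<Longrightarrow> br ys \<in> B"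
    using A B unfolding graded_subalgebra_iff by blast+
  have first: "xs ! 0 \<in> set xs"
    using xs n_pos by simp
  define ts where "ts = map (\<lambda>x. x \<in> A) xs"
  consider "set xs \<subseteq> A" | "set xs \<inter> A = {}" | "True \<in> set ts" "False \<in> set ts"
    unfolding ts_def by auto
  then show ?thesis
  proof cases
    case 1
    then show ?thesis
      using closed(1)[OF xs(1)] first by auto
  next
    case 2
    then have "set xs \<subseteq> B"
      using xs(2) by blast
    then show ?thesis
      using closed(2)[OF xs(1)] first 2 by auto
  next
    case 3
    have "xs ! j \<in> A \<union> B" if "j < n" for j
      using xs(2) nth_mem[of j xs] that unfolding xs(1) by blast
    then have "length ts = n" "\<forall>j<n. xs ! j \<in> (if ts ! j then A else B)"
      using xs(1) unfolding ts_def by auto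
    then have "br xs = 0"
      using mixed_bracket_vanishes[OF graded mixed _ 3 xs(1)] by blast
    then show ?thesis
      using graded V.subspace_0 unfolding graded_subspace_def by simp
  qed
qed

lemma reflection_centroid:
  assumes decomposition: "product_decomposition A B"
  shows "centroid scale G n br \<alpha> (reflection A B)"
proof -
  have A: "graded_subalgebra scale G n br \<alpha> A" and B: "graded_subalgebra scale G n br \<alpha> B"
    and mixed: "mixed_brackets_vanish A B"
    using decomposition unfolding product_decomposition_def by blast+
  then have graded: "graded_subspace A" "graded_subspace B"
    and invariant: "\<alpha> ` A \<subseteq> A" "\<alpha> ` B \<subseteq> B"
    unfolding graded_subalgebra_iff by blast+
  have AB: "complementary_subspaces A B"
    using decomposition by (rule product_decomposition_complementary)
  have linear: "Vector_Spaces.linear scale scale (reflection A B)"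
    by (rule linear_reflection[OF AB])
  have "deg0_linear scale G (reflection A B)"
    using linear reflection_homogeneous[OF AB graded] unfolding deg0_linear_def by blast
  moreover have "reflection A B \<circ> \<alpha> = \<alpha> \<circ> reflection A B"
    by (rule reflection_commute[OF AB linear_alpha invariant])
  moreover have "reflection A B (br xs) = br (xs[0 := reflection A B (xs ! 0)])" if "length xs = n" for xs
  proof (rule slot_commute_from_generators[OF linear, where X = "A \<union> B"])
    fix v
    obtain a b where "a \<in> A" "b \<in> B" "v = a + b"
      using AB unfolding complementary_subspaces_def by blast
    then show "\<exists>S f. finite S \<and> (\<forall>s\<in>S. f s \<in> A \<union> B) \<and> v = sum f (S :: bool set)"
      by (intro exI[of _ UNIV] exI[of _ "\<lambda>t. if t then a else b"]) (simp add: UNIV_bool add.commute)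
  next
    fix ys :: "'v list"
    assume ys: "length ys = n" "set ys \<subseteq> A \<union> B"
    then have "ys ! 0 \<in> A \<union> B"
      using n_pos nth_mem[of 0 ys] unfolding ys(1) by blast
    then show "reflection A B (br ys) = br (ys[0 := reflection A B (ys ! 0)])"
      using bracket_in_summands[OF A B mixed ys] reflection_fixes[OF AB] reflection_negates[OF AB]
        br_neg[OF ys(1) n_pos, of "ys ! 0"]
      by (cases "ys ! 0 \<in> A") auto
  qed (rule that)
  ultimately show ?thesis
    unfolding centroid_def by blast
qed

lemma strict_product_structure_reflection:
  assumes decomposition: "product_decomposition A B"
  shows "strict_product_structure scale G n br \<alpha> (reflection A B)"
proof -
  have AB: "complementary_subspaces A B"
    using decomposition by (rule product_decomposition_complementary)
  have "A \<noteq> {0}" "B \<noteq> {0}"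
    using decomposition unfolding product_decomposition_def by blast+
  moreover have "centroid scale G n br \<alpha> (reflection A B)"
    using decomposition by (rule reflection_centroid)
  ultimately show ?thesis
    unfolding strict_product_structure_def almost_product_structure_def
    using reflection_involutive[OF AB] reflection_neq_id[OF AB] reflection_neq_uminus[OF AB]
    unfolding centroid_def by blast
qed

theorem strict_product_structure_iff_product_decomposition:
  "(\<exists>P. strict_product_structure scale G n br \<alpha> P) \<longleftrightarrow> (\<exists>A B. product_decomposition A B)"
  using strict_product_structure_eigenspaces strict_product_structure_reflection by blast

end

theorem proposition6p11:
  fixes scale :: "'k::field_char_0 \<Rightarrow> 'v::ab_group_add \<Rightarrow> 'v"
    and G :: "'g::ab_group_add \<Rightarrow> 'v set"
    and n :: nat
    and br :: "'v list \<Rightarrow> 'v"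
    and eps :: "'g \<Rightarrow> 'g \<Rightarrow> 'k"
    and \<alpha> :: "'v \<Rightarrow> 'v"
  assumes "n \<ge> 2"
    and "n_Hom_Lie_color_algebra scale G n br eps \<alpha>"
  shows "(\<exists>P. strict_product_structure scale G n br \<alpha> P) \<longleftrightarrow>
         (\<exists>gp gm. graded_subalgebra scale G n br \<alpha> gp \<and> graded_subalgebra scale G n br \<alpha> gm \<and>
                  gp \<noteq> {0} \<and> gm \<noteq> {0} \<and>
                  gp \<inter> gm = {0} \<and> (\<forall>v. \<exists>a\<in>gp. \<exists>b\<in>gm. v = a + b) \<and>
                  (\<forall>i. 1 \<le> i \<and> i \<le> n - 1 \<longrightarrow>
                     (\<forall>as bs. length as = i \<and> set as \<subseteq> gp \<and> length bs = n - i \<and> set bs \<subseteq> gm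
                        \<longrightarrow> br (as @ bs) = 0)))"
proof -
  interpret n_hom_lie_color scale G n br eps \<alpha>
    using assms by unfold_locales simp_all
  show ?thesis
    using strict_product_structure_iff_product_decomposition
    unfolding product_decomposition_def mixed_brackets_vanish_def .
qed

end
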